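(* (Completeness of IML1.) Let $\Gamma$ be an IML1-theory and $\varphi$ a formula with $\varphi\notin\Gamma$. Then there exist an nIML1-model $\langle W,\mathcal{N},V\rangle$ and a world $v\in W$ such that $v\Vdash\psi$ for every $\psi\in\Gamma$ and $v\nVdash\varphi$.
   Context: Formulas are built from a denumerable set $PV$ of propositional variables and $\bot$ using $\land,\lor,\rightarrow$ and unary $\Delta$; $\lnot\varphi$ abbreviates $\varphi\rightarrow\bot$. The axioms of IML1 are all instances of the axiom schemes of intuitionistic propositional calculus (in this language), of K: $\Delta(\varphi\rightarrow\psi)\rightarrow(\Delta\varphi\rightarrow\Delta\psi)$ and of T: $\Delta\varphi\rightarrow\varphi$. An IML1-theory is a set of formulas containing all axioms and closed under modus ponens and under RN (if $\varphi$ is in the set then so is $\Delta\varphi$). An nIML1-frame is a pair $\langle W,\mathcal{N}\rangle$, $W\neq\emptyset$, $\mathcal{N}:W\to P(P(W))$, such that for all $w$: (a) $w\in\bigcap\mathcal{N}_w$; (b) $\bigcap\mathcal{N}_w\in\mathcal{N}_w$; (c) $u\in\bigcap\mathcal{N}_w\Rightarrow\bigcap\mathcal{N}_u\subseteq\bigcap\mathcal{N}_w$; (d) $\bigcap\mathcal{N}_w\subseteq X\subseteq\bigcup\mathcal{N}_w\Rightarrow X\in\mathcal{N}_w$; (e) $u\in\bigcap\mathcal{N}_w\Rightarrow\bigcup\mathcal{N}_u\subseteq\bigcup\mathcal{N}_w$ ($\bigcap\mathcal{N}_w$, $\bigcup\mathcal{N}_w$ being the intersection and union of the family $\mathcal{N}_w$).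 An nIML1-model adds $V:PV\to P(W)$ with $w\in V(q)\Rightarrow\bigcap\mathcal{N}_w\subseteq V(q)$. Forcing: $w\Vdash q$ iff $w\in V(q)$; $w\nVdash\bot$; $\land,\lor$ pointwise; $w\Vdash\varphi\rightarrow\psi$ iff every $v\in\bigcap\mathcal{N}_w$ has $v\nVdash\varphi$ or $v\Vdash\psi$; $w\Vdash\Delta\varphi$ iff every $v\in\bigcup\mathcal{N}_w$ has $v\Vdash\varphi$. *)

theory Defs
  imports Main
begin

datatype form =
    Var nat
  | Bot
  | And form form
  | Or form form
  | Imp form form
  | Dlt form

definition Neg :: "form \<Rightarrow> form" where
  "Neg \<phi> = Imp \<phi> Bot"

inductive ipc_axiom :: "form \<Rightarrow> bool" where
  A1: "ipc_axiom (Imp \<phi> (Imp \<psi> \<phi>))"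
| A2: "ipc_axiom (Imp (Imp \<phi> (Imp \<psi> \<chi>)) (Imp (Imp \<phi> \<psi>) (Imp \<phi> \<chi>)))"
| A3: "ipc_axiom (Imp (And \<phi> \<psi>) \<phi>)"
| A4: "ipc_axiom (Imp (And \<phi> \<psi>) \<psi>)"
| A5: "ipc_axiom (Imp \<phi> (Imp \<psi> (And \<phi> \<psi>)))"
| A6: "ipc_axiom (Imp \<phi> (Or \<phi> \<psi>))"
| A7: "ipc_axiom (Imp \<psi> (Or \<phi> \<psi>))"
| A8: "ipc_axiom (Imp (Imp \<phi> \<chi>) (Imp (Imp \<psi> \<chi>) (Imp (Or \<phi> \<psi>) \<chi>)))"
| A9: "ipc_axiom (Imp Bot \<phi>)"

inductive iml1_axiom :: "form \<Rightarrow> bool" where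
  ipc: "ipc_axiom \<phi> \<Longrightarrow> iml1_axiom \<phi>"
| K: "iml1_axiom (Imp (Dlt (Imp \<phi> \<psi>)) (Imp (Dlt \<phi>) (Dlt \<psi>)))"
| T: "iml1_axiom (Imp (Dlt \<phi>) \<phi>)"

definition iml1_theory :: "form set \<Rightarrow> bool" where
  "iml1_theory \<Gamma> \<longleftrightarrow>
     (\<forall>\<phi>. iml1_axiom \<phi> \<longrightarrow> \<phi> \<in> \<Gamma>) \<and>
     (\<forall>\<phi> \<psi>. \<phi> \<in> \<Gamma> \<longrightarrow> Imp \<phi> \<psi> \<in> \<Gamma> \<longrightarrow> \<psi> \<in> \<Gamma>) \<and>
     (\<forall>\<phi>. \<phi> \<in> \<Gamma> \<longrightarrow> Dlt \<phi> \<in> \<Gamma>)"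

definition nIML1_frame :: "'w set \<Rightarrow> ('w \<Rightarrow> 'w set set) \<Rightarrow> bool" where
  "nIML1_frame W N \<longleftrightarrow>
     W \<noteq> {} \<and>
     (\<forall>w\<in>W. N w \<subseteq> Pow W) \<and>
     (\<forall>w\<in>W.
        w \<in> \<Inter>(N w) \<and>
        \<Inter>(N w) \<in> N w \<and>
        (\<forall>u. u \<in> \<Inter>(N w) \<longrightarrow> \<Inter>(N u) \<subseteq> \<Inter>(N w)) \<and>
        (\<forall>X. \<Inter>(N w) \<subseteq> X \<and> X \<subseteq> \<Union>(N w) \<longrightarrow> X \<in> N w) \<and>
        (\<forall>u. u \<in> \<Inter>(N w) \<longrightarrow> \<Union>(N u) \<subseteq> \<Union>(N w)))"

definition nIML1_model :: "'w set \<Rightarrow> ('w \<Rightarrow> 'w set set) \<Rightarrow> (nat \<Rightarrow> 'w set) \<Rightarrow> bool" where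
  "nIML1_model W N V \<longleftrightarrow>
     nIML1_frame W N \<and>
     (\<forall>q. V q \<subseteq> W) \<and>
     (\<forall>q. \<forall>w\<in>W. w \<in> V q \<longrightarrow> \<Inter>(N w) \<subseteq> V q)"

fun forces :: "('w \<Rightarrow> 'w set set) \<Rightarrow> (nat \<Rightarrow> 'w set) \<Rightarrow> 'w \<Rightarrow> form \<Rightarrow> bool" where
  "forces N V w (Var q) \<longleftrightarrow> w \<in> V q"
| "forces N V w Bot \<longleftrightarrow> False"
| "forces N V w (And \<phi> \<psi>) \<longleftrightarrow> forces N V w \<phi> \<and> forces N V w \<psi>"
| "forces N V w (Or \<phi> \<psi>) \<longleftrightarrow> forces N V w \<phi> \<or> forces N V w \<psi>"
| "forces N V w (Imp \<phi> \<psi>) \<longleftrightarrow>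
     (\<forall>v\<in>\<Inter>(N w). \<not> forces N V v \<phi> \<or> forces N V v \<psi>)"
| "forces N V w (Dlt \<phi>) \<longleftrightarrow> (\<forall>v\<in>\<Union>(N w). forces N V v \<phi>)"

end

theory Submission
  imports Defs
begin

text \<open>Worlds are the prime, consistent sets of formulas that contain every
  IML1-theorem and are closed under modus ponens (but not necessarily under RN). For a world
  \<open>w\<close>, the neighbourhoods are all families of worlds between the worlds extending \<open>w\<close> and the
  worlds containing \<open>{\<psi>. \<Delta>\<psi> \<in> w}\<close>; so \<open>\<Inter>\<N>\<^sub>w\<close> interprets \<open>\<rightarrow>\<close> as in the canonical
  Kripke model of intuitionistic logic, and \<open>\<Union>\<N>\<^sub>w\<close> interprets \<open>\<Delta>\<close> as in the canonical model
  of K. Axiom T makes the first family a subfamily of the second. A Lindenbaum argument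
  (Zorn's lemma on MP-closed extensions omitting a formula) yields the truth lemma, and
  extending \<open>\<Gamma>\<close> to a world omitting \<open>\<phi>\<close> refutes \<open>\<phi>\<close>.\<close>

inductive_set iml1_thm :: "form set" where
  ax: "iml1_axiom \<phi> \<Longrightarrow> \<phi> \<in> iml1_thm"
| mp: "\<phi> \<in> iml1_thm \<Longrightarrow> Imp \<phi> \<psi> \<in> iml1_thm \<Longrightarrow> \<psi> \<in> iml1_thm"
| rn: "\<phi> \<in> iml1_thm \<Longrightarrow> Dlt \<phi> \<in> iml1_thm"

definition iml1_closed :: "form set \<Rightarrow> bool" where
  "iml1_closed T \<longleftrightarrow> iml1_thm \<subseteq> T \<and> (\<forall>a b. a \<in> T \<longrightarrow> Imp a b \<in> T \<longrightarrow> b \<in> T)"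

definition prime_set :: "form set \<Rightarrow> bool" where
  "prime_set T \<longleftrightarrow> (\<forall>a b. Or a b \<in> T \<longrightarrow> a \<in> T \<or> b \<in> T)"

definition imp_extension :: "form set \<Rightarrow> form \<Rightarrow> form set" where
  "imp_extension T a = {c. Imp a c \<in> T}"

definition unbox :: "form set \<Rightarrow> form set" where
  "unbox T = {a. Dlt a \<in> T}"

lemma iml1_closed_axiom: "iml1_closed T \<Longrightarrow> iml1_axiom a \<Longrightarrow> a \<in> T"
  unfolding iml1_closed_def using iml1_thm.ax by blast

lemma iml1_closed_ipc_axiom: "iml1_closed T \<Longrightarrow> ipc_axiom a \<Longrightarrow> a \<in> T"
  using iml1_closed_axiom iml1_axiom.ipc by blast

lemma iml1_closed_mp: "iml1_closed T \<Longrightarrow> a \<in> T \<Longrightarrow> Imp a b \<in> T \<Longrightarrow> b \<in> T"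
  unfolding iml1_closed_def by blast

lemma iml1_theory_imp_iml1_closed:
  assumes "iml1_theory \<Gamma>"
  shows "iml1_closed \<Gamma>"
proof -
  have "iml1_thm \<subseteq> \<Gamma>"
  proof
    fix x assume "x \<in> iml1_thm"
    then show "x \<in> \<Gamma>"
      using assms unfolding iml1_theory_def by induct blast+
  qed
  then show ?thesis using assms unfolding iml1_closed_def iml1_theory_def by blast
qed

lemma iml1_thm_imp_refl: "Imp a a \<in> iml1_thm"
proof -
  have A2: "Imp (Imp a (Imp (Imp a a) a)) (Imp (Imp a (Imp a a)) (Imp a a)) \<in> iml1_thm"
    by (intro iml1_thm.ax iml1_axiom.ipc ipc_axiom.A2)
  have A1: "Imp a (Imp (Imp a a) a) \<in> iml1_thm" "Imp a (Imp a a) \<in> iml1_thm"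
    by (intro iml1_thm.ax iml1_axiom.ipc ipc_axiom.A1)+
  show ?thesis using iml1_thm.mp[OF A1(2) iml1_thm.mp[OF A1(1) A2]] .
qed

text \<open>The one-world frame in which \<open>\<Delta>\<close> and \<open>\<rightarrow>\<close> both quantify over that world validates
  every theorem but not \<open>\<bottom>\<close>.\<close>

lemma Bot_notin_iml1_thm: "Bot \<notin> iml1_thm"
proof -
  have "\<forall>w::nat. forces (\<lambda>_. {{w}}) (\<lambda>_. {}) w \<phi>" if "\<phi> \<in> iml1_thm" for \<phi>
    using that
  proof induct
    case (ax \<phi>) then show ?case
      by (induct rule: iml1_axiom.induct) (auto elim: ipc_axiom.cases)
  qed auto
  then show ?thesis by fastforce
qed

lemma iml1_closed_iml1_thm: "iml1_closed iml1_thm"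
  unfolding iml1_closed_def using iml1_thm.mp by blast

lemma
  assumes "iml1_closed T"
  shows iml1_closed_imp_extension: "iml1_closed (imp_extension T a)"
    and subset_imp_extension: "T \<subseteq> imp_extension T a"
    and mem_imp_extension: "a \<in> imp_extension T a"
proof -
  show sub: "T \<subseteq> imp_extension T a"
    unfolding imp_extension_def
    using iml1_closed_ipc_axiom[OF assms ipc_axiom.A1] iml1_closed_mp[OF assms] by blast
  show "a \<in> imp_extension T a"
    using iml1_thm_imp_refl assms unfolding imp_extension_def iml1_closed_def by blast
  have "d \<in> imp_extension T a"
    if "c \<in> imp_extension T a" "Imp c d \<in> imp_extension T a" for c d
    using that iml1_closed_ipc_axiom[OF assms ipc_axiom.A2, of a c d] iml1_closed_mp[OF assms]
    unfolding imp_extension_def by blast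
  then show "iml1_closed (imp_extension T a)"
    using sub assms unfolding iml1_closed_def by blast
qed

lemma iml1_closed_Union_chain:
  assumes "C \<in> chains {M. iml1_closed M}" and "C \<noteq> {}"
  shows "iml1_closed (\<Union>C)"
  unfolding iml1_closed_def
proof (intro conjI allI impI)
  show "iml1_thm \<subseteq> \<Union>C"
    using assms chainsD2 unfolding iml1_closed_def by blast
next
  fix x y assume "x \<in> \<Union>C" "Imp x y \<in> \<Union>C"
  then obtain X Y where XY: "X \<in> C" "Y \<in> C" "x \<in> X" "Imp x y \<in> Y" by blast
  have "X \<subseteq> Y \<or> Y \<subseteq> X" using chainsD[OF assms(1) XY(1,2)] .
  moreover have "iml1_closed X" "iml1_closed Y" using XY chainsD2[OF assms(1)] by auto
  ultimately show "y \<in> \<Union>C" using XY iml1_closed_mp by blast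
qed

lemma prime_set_if_omits_consequent:
  assumes M: "iml1_closed M" and b: "b \<notin> M" and imp_b: "\<And>c. c \<notin> M \<Longrightarrow> Imp c b \<in> M"
  shows "prime_set M"
  unfolding prime_set_def
proof (intro allI impI)
  fix c d assume cd: "Or c d \<in> M"
  show "c \<in> M \<or> d \<in> M"
  proof (rule ccontr)
    assume "\<not> (c \<in> M \<or> d \<in> M)"
    then have "Imp c b \<in> M" "Imp d b \<in> M" using imp_b by auto
    moreover have "Imp (Imp c b) (Imp (Imp d b) (Imp (Or c d) b)) \<in> M"
      using iml1_closed_ipc_axiom[OF M ipc_axiom.A8] .
    ultimately have "b \<in> M" using cd iml1_closed_mp[OF M] by blast
    then show False using b by blast
  qed
qed

lemma lindenbaum:
  assumes T: "iml1_closed T" and b: "b \<notin> T"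
  obtains M where "iml1_closed M" "prime_set M" "T \<subseteq> M" "b \<notin> M"
proof -
  define A where "A = {M. iml1_closed M \<and> T \<subseteq> M \<and> b \<notin> M}"
  have "\<forall>C\<in>chains A. \<exists>U\<in>A. \<forall>X\<in>C. X \<subseteq> U"
  proof
    fix C assume C: "C \<in> chains A"
    show "\<exists>U\<in>A. \<forall>X\<in>C. X \<subseteq> U"
    proof (cases "C = {}")
      case True then show ?thesis using T b unfolding A_def by auto
    next
      case False
      have "C \<in> chains {M. iml1_closed M}"
        using C unfolding A_def chains_def by blast
      then have "iml1_closed (\<Union>C)" using iml1_closed_Union_chain False by blast
      moreover have "T \<subseteq> \<Union>C" "b \<notin> \<Union>C" using False chainsD2[OF C] unfolding A_def by auto
      ultimately show ?thesis unfolding A_def by blast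
    qed
  qed
  from Zorn_Lemma2[OF this] obtain M
    where M: "M \<in> A" and maximal: "\<forall>X\<in>A. M \<subseteq> X \<longrightarrow> X = M"
    by blast
  have M_props: "iml1_closed M" "T \<subseteq> M" "b \<notin> M" using M unfolding A_def by auto
  txt \<open>By maximality, every \<open>c \<notin> M\<close> has \<open>c \<rightarrow> b \<in> M\<close>: otherwise \<open>{d. c \<rightarrow> d \<in> M}\<close> would be
    a proper extension of \<open>M\<close> in \<open>A\<close>.\<close>
  have imp_b: "Imp c b \<in> M" if "c \<notin> M" for c
  proof (rule ccontr)
    assume "Imp c b \<notin> M"
    then have "b \<notin> imp_extension M c" unfolding imp_extension_def by blast
    then have "imp_extension M c \<in> A"
      using iml1_closed_imp_extension[OF M_props(1)] subset_imp_extension[OF M_props(1)] M_props(2)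
      unfolding A_def by blast
    then have "imp_extension M c = M"
      using maximal subset_imp_extension[OF M_props(1)] by blast
    then show False using mem_imp_extension[OF M_props(1), of c] that by blast
  qed
  have "prime_set M" using prime_set_if_omits_consequent M_props imp_b by blast
  then show thesis using that M_props by blast
qed

definition canonical_worlds :: "form set set" where
  "canonical_worlds = {T. iml1_closed T \<and> prime_set T \<and> Bot \<notin> T}"

definition canonical_succ :: "form set \<Rightarrow> form set set" where
  "canonical_succ w = {u \<in> canonical_worlds. w \<subseteq> u}"

definition canonical_box_succ :: "form set \<Rightarrow> form set set" where
  "canonical_box_succ w = {u \<in> canonical_worlds. unbox w \<subseteq> u}"

definition canonical_nbhd :: "form set \<Rightarrow> form set set set" where
  "canonical_nbhd w = {X. canonical_succ w \<subseteq> X \<and> X \<subseteq> canonical_box_succ w}"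

definition canonical_val :: "nat \<Rightarrow> form set set" where
  "canonical_val q = {u \<in> canonical_worlds. Var q \<in> u}"

lemma canonical_worldsD: "w \<in> canonical_worlds \<Longrightarrow> iml1_closed w"
  unfolding canonical_worlds_def by blast

lemma lindenbaum_world:
  assumes "iml1_closed T" "b \<notin> T"
  obtains M where "M \<in> canonical_worlds" "T \<subseteq> M" "b \<notin> M"
proof -
  obtain M where M: "iml1_closed M" "prime_set M" "T \<subseteq> M" "b \<notin> M"
    using lindenbaum[OF assms] .
  have "Bot \<notin> M"
    using M iml1_closed_mp iml1_closed_ipc_axiom[OF M(1) ipc_axiom.A9, of b] by blast
  then show thesis using that M unfolding canonical_worlds_def by blast
qed

lemma canonical_worlds_nonempty: "canonical_worlds \<noteq> {}"
  using lindenbaum_world[OF iml1_closed_iml1_thm Bot_notin_iml1_thm] by blast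

lemma iml1_closed_unbox: "iml1_closed T \<Longrightarrow> iml1_closed (unbox T)"
  unfolding iml1_closed_def unbox_def
  using iml1_thm.rn iml1_thm.ax[OF iml1_axiom.K] by blast

lemma unbox_subset: "iml1_closed T \<Longrightarrow> unbox T \<subseteq> T"
  unfolding unbox_def using iml1_closed_axiom[OF _ iml1_axiom.T] iml1_closed_mp by blast

lemma canonical_succ_subset_box_succ:
  "w \<in> canonical_worlds \<Longrightarrow> canonical_succ w \<subseteq> canonical_box_succ w"
  unfolding canonical_succ_def canonical_box_succ_def using unbox_subset canonical_worldsD
  by blast

lemma Inter_canonical_nbhd:
  "w \<in> canonical_worlds \<Longrightarrow> \<Inter>(canonical_nbhd w) = canonical_succ w"
  using canonical_succ_subset_box_succ unfolding canonical_nbhd_def by blast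

lemma Union_canonical_nbhd:
  "w \<in> canonical_worlds \<Longrightarrow> \<Union>(canonical_nbhd w) = canonical_box_succ w"
  using canonical_succ_subset_box_succ unfolding canonical_nbhd_def by blast

lemma canonical_frame: "nIML1_frame canonical_worlds canonical_nbhd"
  unfolding nIML1_frame_def
proof (intro conjI ballI allI impI)
  show "canonical_worlds \<noteq> {}" by (rule canonical_worlds_nonempty)
next
  fix w assume w: "w \<in> canonical_worlds"
  note Inter = Inter_canonical_nbhd[OF w] and Union = Union_canonical_nbhd[OF w]
  show "canonical_nbhd w \<subseteq> Pow canonical_worlds"
    unfolding canonical_nbhd_def canonical_box_succ_def by blast
  show "w \<in> \<Inter>(canonical_nbhd w)" using w unfolding Inter canonical_succ_def by blast
  show "\<Inter>(canonical_nbhd w) \<in> canonical_nbhd w"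
    using canonical_succ_subset_box_succ[OF w] unfolding Inter canonical_nbhd_def by blast
  fix X assume "\<Inter>(canonical_nbhd w) \<subseteq> X \<and> X \<subseteq> \<Union>(canonical_nbhd w)"
  then show "X \<in> canonical_nbhd w" unfolding Inter Union canonical_nbhd_def by blast
next
  fix w u assume w: "w \<in> canonical_worlds" and "u \<in> \<Inter>(canonical_nbhd w)"
  then have u: "u \<in> canonical_worlds" "w \<subseteq> u"
    unfolding Inter_canonical_nbhd[OF w] canonical_succ_def by auto
  show "\<Inter>(canonical_nbhd u) \<subseteq> \<Inter>(canonical_nbhd w)"
    using u unfolding Inter_canonical_nbhd[OF w] Inter_canonical_nbhd[OF u(1)]
      canonical_succ_def by blast
  show "\<Union>(canonical_nbhd u) \<subseteq> \<Union>(canonical_nbhd w)"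
    using u unfolding Union_canonical_nbhd[OF w] Union_canonical_nbhd[OF u(1)]
      canonical_box_succ_def unbox_def by blast
qed

lemma canonical_model: "nIML1_model canonical_worlds canonical_nbhd canonical_val"
  unfolding nIML1_model_def
  using canonical_frame Inter_canonical_nbhd
  unfolding canonical_val_def canonical_succ_def by blast

lemma world_And_iff:
  assumes "w \<in> canonical_worlds"
  shows "And a b \<in> w \<longleftrightarrow> a \<in> w \<and> b \<in> w"
  using canonical_worldsD[OF assms] iml1_closed_mp
    iml1_closed_ipc_axiom[OF _ ipc_axiom.A3, of w a b] iml1_closed_ipc_axiom[OF _ ipc_axiom.A4]
    iml1_closed_ipc_axiom[OF _ ipc_axiom.A5, of w a b]
  by blast

lemma world_Or_iff:
  assumes "w \<in> canonical_worlds"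
  shows "Or a b \<in> w \<longleftrightarrow> a \<in> w \<or> b \<in> w"
  using assms iml1_closed_mp iml1_closed_ipc_axiom[OF _ ipc_axiom.A6, of w a b]
    iml1_closed_ipc_axiom[OF _ ipc_axiom.A7, of w b a]
  unfolding canonical_worlds_def prime_set_def by blast

lemma world_Imp_iff:
  assumes w: "w \<in> canonical_worlds"
  shows "Imp a b \<in> w \<longleftrightarrow> (\<forall>v\<in>canonical_succ w. a \<in> v \<longrightarrow> b \<in> v)"
proof
  assume "Imp a b \<in> w"
  then show "\<forall>v\<in>canonical_succ w. a \<in> v \<longrightarrow> b \<in> v"
    unfolding canonical_succ_def using canonical_worldsD iml1_closed_mp by blast
next
  assume succ: "\<forall>v\<in>canonical_succ w. a \<in> v \<longrightarrow> b \<in> v"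
  note closed = canonical_worldsD[OF w]
  show "Imp a b \<in> w"
  proof (rule ccontr)
    assume "Imp a b \<notin> w"
    then have "b \<notin> imp_extension w a" unfolding imp_extension_def by blast
    then obtain M where "M \<in> canonical_worlds" "imp_extension w a \<subseteq> M" "b \<notin> M"
      using lindenbaum_world[OF iml1_closed_imp_extension[OF closed]] by metis
    then show False
      using succ subset_imp_extension[OF closed] mem_imp_extension[OF closed, of a]
      unfolding canonical_succ_def by blast
  qed
qed

lemma world_Dlt_iff:
  assumes w: "w \<in> canonical_worlds"
  shows "Dlt a \<in> w \<longleftrightarrow> (\<forall>v\<in>canonical_box_succ w. a \<in> v)"
proof
  assume "Dlt a \<in> w"
  then show "\<forall>v\<in>canonical_box_succ w. a \<in> v"
    unfolding canonical_box_succ_def unbox_def by blast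
next
  assume box_succ: "\<forall>v\<in>canonical_box_succ w. a \<in> v"
  show "Dlt a \<in> w"
  proof (rule ccontr)
    assume "Dlt a \<notin> w"
    then have "a \<notin> unbox w" by (simp add: unbox_def)
    then obtain M where "M \<in> canonical_worlds" "unbox w \<subseteq> M" "a \<notin> M"
      using lindenbaum_world[OF iml1_closed_unbox[OF canonical_worldsD[OF w]]] by metis
    then show False using box_succ unfolding canonical_box_succ_def by blast
  qed
qed

lemma truth_lemma:
  "w \<in> canonical_worlds \<Longrightarrow> forces canonical_nbhd canonical_val w \<psi> \<longleftrightarrow> \<psi> \<in> w"
proof (induct \<psi> arbitrary: w)
  case (Imp a b)
  then show ?case
    by (auto simp: world_Imp_iff Inter_canonical_nbhd canonical_succ_def)
next
  case (Dlt a)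
  then show ?case
    by (auto simp: world_Dlt_iff Union_canonical_nbhd canonical_box_succ_def)
qed (auto simp: canonical_val_def canonical_worlds_def world_And_iff world_Or_iff)

theorem mainTheorem3:
  fixes \<Gamma> :: "form set" and \<phi> :: form
  assumes "iml1_theory \<Gamma>" and "\<phi> \<notin> \<Gamma>"
  shows "\<exists>(W :: form set set) N V. nIML1_model W N V \<and>
           (\<exists>v\<in>W. (\<forall>\<psi>\<in>\<Gamma>. forces N V v \<psi>) \<and> \<not> forces N V v \<phi>)"
proof -
  obtain M where M: "M \<in> canonical_worlds" "\<Gamma> \<subseteq> M" "\<phi> \<notin> M"
    using lindenbaum_world[OF iml1_theory_imp_iml1_closed[OF assms(1)] assms(2)] .
  then have "(\<forall>\<psi>\<in>\<Gamma>. forces canonical_nbhd canonical_val M \<psi>)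
      \<and> \<not> forces canonical_nbhd canonical_val M \<phi>"
    using truth_lemma[OF M(1)] by blast
  then show ?thesis using canonical_model M(1) by blast
qed

end
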